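(* Let $\Gamma$ be a finitely generated group with a splitting $\Gamma=A\ast B$ into two non-trivial groups, such that $A$ contains an element of infinite order. Then for any finite-dimensional Banach $\Gamma$-module $E$, the split classes form an infinite-dimensional subspace of $\mathrm{H}^2_\mathrm{b}(\Gamma,E)$.
   Context: A Banach $\Gamma$-module is a Banach space $E$ with a linear isometric $\Gamma$-action $g.v$. A quasicocycle is a map $f:\Gamma\to E$ with $\sup_{g,h}\|f(gh)-f(g)-g.f(h)\|<\infty$; it is alternating if $f(g)+g.f(g^{-1})=0$ for all $g$; $\mathrm{Q}\mathcal{Z}_{\mathrm{alt}}(\Gamma,E)$ denotes the alternating quasicocycles. $\mathrm{H}^*_\mathrm{b}(\Gamma,E)$ is the cohomology of the bounded bar complex $\ell^\infty(\Gamma^k,E)$ with the usual inhomogeneous coboundary; for a quasicocycle $f$, $\partial f(g,h)=f(g)+g.f(h)-f(gh)$ is a bounded 2-cocycle and $\omega_f:=[\partial f]_\mathrm{b}\in\mathrm{H}^2_\mathrm{b}(\Gamma,E)$. Each $1\neq g\in A\ast B$ has a unique normal form $g=a_1b_1\cdots a_nb_n$ ($a_i\in A$, $b_i\in B$, all non-trivial except possibly $a_1$ or $b_n$). For $f_A\in\mathrm{Q}\mathcal{Z}_{\mathrm{alt}}(A,E)$, $f_B\in\mathrm{Q}\mathcal{Z}_{\mathrm{alt}}(B,E)$ the split quasicocycle is $f_A\ast f_B(1)=0$, $(f_A\ast f_B)(a_1b_1\cdots a_nb_n)=f_A(a_1)+a_1.f_B(b_1)+a_1b_1.f_A(a_2)+\dots+a_1b_1\cdots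 b_{n-1}a_n.f_B(b_n)$. The split classes (for the splitting $A\ast B$) are the classes $\omega_{f_A\ast f_B}$; they form the image of the linear map $(f_A,f_B)\mapsto\omega_{f_A\ast f_B}$. *)

theory Defs
  imports Complex_Main "HOL-Algebra.Generated_Groups"
begin

definition finitely_generated :: "('g, 'b) monoid_scheme \<Rightarrow> bool" where
  "finitely_generated G \<longleftrightarrow>
     (\<exists>S. finite S \<and> S \<subseteq> carrier G \<and> generate G S = carrier G)"

definition infinite_order :: "('g, 'b) monoid_scheme \<Rightarrow> 'g \<Rightarrow> bool" where
  "infinite_order G a \<longleftrightarrow> (\<forall>n::nat. n > 0 \<longrightarrow> a [^]\<^bsub>G\<^esub> n \<noteq> \<one>\<^bsub>G\<^esub>)"

definition reduced_word :: "('g, 'b) monoid_scheme \<Rightarrow> 'g set \<Rightarrow> 'g set \<Rightarrow> 'g list \<Rightarrow> bool" where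
  "reduced_word G A B w \<longleftrightarrow>
     (\<forall>x\<in>set w. x \<in> (A - {\<one>\<^bsub>G\<^esub>}) \<union> (B - {\<one>\<^bsub>G\<^esub>})) \<and>
     (\<forall>i. Suc i < length w \<longrightarrow>
        \<not> (w ! i \<in> A \<and> w ! Suc i \<in> A) \<and> \<not> (w ! i \<in> B \<and> w ! Suc i \<in> B))"

definition word_prod :: "('g, 'b) monoid_scheme \<Rightarrow> 'g list \<Rightarrow> 'g" where
  "word_prod G w = foldr (\<lambda>x y. x \<otimes>\<^bsub>G\<^esub> y) w \<one>\<^bsub>G\<^esub>"

definition free_product_splitting :: "('g, 'b) monoid_scheme \<Rightarrow> 'g set \<Rightarrow> 'g set \<Rightarrow> bool" where
  "free_product_splitting G A B \<longleftrightarrow>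
     subgroup A G \<and> subgroup B G \<and> A \<inter> B = {\<one>\<^bsub>G\<^esub>} \<and>
     (\<forall>g\<in>carrier G. \<exists>!w. reduced_word G A B w \<and> word_prod G w = g)"

definition normal_form :: "('g, 'b) monoid_scheme \<Rightarrow> 'g set \<Rightarrow> 'g set \<Rightarrow> 'g \<Rightarrow> 'g list" where
  "normal_form G A B g = (THE w. reduced_word G A B w \<and> word_prod G w = g)"

definition finite_dimensional_space :: "'e::real_vector itself \<Rightarrow> bool" where
  "finite_dimensional_space TYPE('e) \<longleftrightarrow> (\<exists>S::'e set. finite S \<and> span S = UNIV)"

definition banach_module :: "('g, 'b) monoid_scheme \<Rightarrow> ('g \<Rightarrow> 'e::banach \<Rightarrow> 'e) \<Rightarrow> bool" where
  "banach_module G \<rho> \<longleftrightarrow>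
     (\<forall>g\<in>carrier G. linear (\<rho> g) \<and> (\<forall>v. norm (\<rho> g v) = norm v)) \<and>
     \<rho> \<one>\<^bsub>G\<^esub> = id \<and>
     (\<forall>g\<in>carrier G. \<forall>h\<in>carrier G. \<rho> (g \<otimes>\<^bsub>G\<^esub> h) = \<rho> g \<circ> \<rho> h)"

definition quasicocycle :: "('g, 'b) monoid_scheme \<Rightarrow> 'g set \<Rightarrow> ('g \<Rightarrow> 'e::banach \<Rightarrow> 'e) \<Rightarrow> ('g \<Rightarrow> 'e) \<Rightarrow> bool" where
  "quasicocycle G H \<rho> f \<longleftrightarrow>
     (\<exists>C. \<forall>g\<in>H. \<forall>h\<in>H. norm (f (g \<otimes>\<^bsub>G\<^esub> h) - f g - \<rho> g (f h)) \<le> C)"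

definition alternating :: "('g, 'b) monoid_scheme \<Rightarrow> 'g set \<Rightarrow> ('g \<Rightarrow> 'e::banach \<Rightarrow> 'e) \<Rightarrow> ('g \<Rightarrow> 'e) \<Rightarrow> bool" where
  "alternating G H \<rho> f \<longleftrightarrow> (\<forall>g\<in>H. f g + \<rho> g (f (inv\<^bsub>G\<^esub> g)) = 0)"

definition alt_quasicocycle :: "('g, 'b) monoid_scheme \<Rightarrow> 'g set \<Rightarrow> ('g \<Rightarrow> 'e::banach \<Rightarrow> 'e) \<Rightarrow> ('g \<Rightarrow> 'e) \<Rightarrow> bool" where
  "alt_quasicocycle G H \<rho> f \<longleftrightarrow> quasicocycle G H \<rho> f \<and> alternating G H \<rho> f"

fun split_word :: "'g set \<Rightarrow> ('g \<Rightarrow> 'e::banach \<Rightarrow> 'e) \<Rightarrow> ('g \<Rightarrow> 'e) \<Rightarrow> ('g \<Rightarrow> 'e) \<Rightarrow> 'g list \<Rightarrow> 'e" where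
  "split_word A \<rho> fA fB [] = 0"
| "split_word A \<rho> fA fB (x # xs) = (if x \<in> A then fA x else fB x) + \<rho> x (split_word A \<rho> fA fB xs)"

definition split_quasicocycle ::
  "('g, 'b) monoid_scheme \<Rightarrow> 'g set \<Rightarrow> 'g set \<Rightarrow> ('g \<Rightarrow> 'e::banach \<Rightarrow> 'e) \<Rightarrow> ('g \<Rightarrow> 'e) \<Rightarrow> ('g \<Rightarrow> 'e) \<Rightarrow> 'g \<Rightarrow> 'e" where
  "split_quasicocycle G A B \<rho> fA fB g = split_word A \<rho> fA fB (normal_form G A B g)"

definition cob1 :: "('g, 'b) monoid_scheme \<Rightarrow> ('g \<Rightarrow> 'e::banach \<Rightarrow> 'e) \<Rightarrow> ('g \<Rightarrow> 'e) \<Rightarrow> 'g \<times> 'g \<Rightarrow> 'e" where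
  "cob1 G \<rho> f = (\<lambda>(g, h). f g + \<rho> g (f h) - f (g \<otimes>\<^bsub>G\<^esub> h))"

definition bounded_coboundaries2 :: "('g, 'b) monoid_scheme \<Rightarrow> ('g \<Rightarrow> 'e::banach \<Rightarrow> 'e) \<Rightarrow> ('g \<times> 'g \<Rightarrow> 'e) set" where
  "bounded_coboundaries2 G \<rho> =
     {c. \<exists>\<phi>. (\<exists>C. \<forall>g\<in>carrier G. norm (\<phi> g) \<le> C) \<and>
            (\<forall>g\<in>carrier G. \<forall>h\<in>carrier G. c (g, h) = cob1 G \<rho> \<phi> (g, h))}"

definition split_cocycles :: "('g, 'b) monoid_scheme \<Rightarrow> 'g set \<Rightarrow> 'g set \<Rightarrow> ('g \<Rightarrow> 'e::banach \<Rightarrow> 'e) \<Rightarrow> ('g \<times> 'g \<Rightarrow> 'e) set" where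
  "split_cocycles G A B \<rho> =
     {cob1 G \<rho> (split_quasicocycle G A B \<rho> fA fB) | fA fB.
        alt_quasicocycle G A \<rho> fA \<and> alt_quasicocycle G B \<rho> fB}"

text \<open>The image of the set of cocycles V in H^2_b = Z^2_b / B^2_b is infinite-dimensional:
  for every n there are n classes from V that are linearly independent in H^2_b,
  i.e. no nontrivial linear combination of the representatives is a bounded coboundary.\<close>
definition infinite_dimensional_in_H2b ::
  "('g, 'b) monoid_scheme \<Rightarrow> ('g \<Rightarrow> 'e::banach \<Rightarrow> 'e) \<Rightarrow> ('g \<times> 'g \<Rightarrow> 'e) set \<Rightarrow> bool" where
  "infinite_dimensional_in_H2b G \<rho> V \<longleftrightarrow>
     (\<forall>n::nat. \<exists>c :: nat \<Rightarrow> 'g \<times> 'g \<Rightarrow> 'e. (\<forall>i<n. c i \<in> V) \<and>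
        (\<forall>a :: nat \<Rightarrow> real.
           (\<lambda>x. \<Sum>i<n. a i *\<^sub>R c i x) \<in> bounded_coboundaries2 G \<rho> \<longrightarrow> (\<forall>i<n. a i = 0)))"

end

theory Submission
  imports Defs "HOL-Analysis.Analysis" "HOL-Algebra.Multiplicative_Group"
begin

text \<open>Fix \<open>a \<in> A\<close> of infinite order, \<open>b \<in> B - {1}\<close> and \<open>v \<noteq> 0\<close>, and let \<open>f\<^sub>k\<close> be the bounded alternating
  function on \<open>A\<close> with value \<open>v\<close> at \<open>a\<^sup>k\<close>, \<open>-a\<^sup>-\<^sup>k.v\<close> at \<open>a\<^sup>-\<^sup>k\<close> and \<open>0\<close> elsewhere. Suppose a linear
  combination \<open>f\<close> of the \<open>f\<^sub>k\<close> has trivial split class, witnessed by a bounded cochain \<open>\<phi>\<close>. On the words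
  \<open>x\<^sub>1 b x\<^sub>2 b \<dots> x\<^sub>n b\<close> with \<open>x\<^sub>i \<in> A - {1}\<close>, the values of \<open>\<phi>\<close> form a bounded set that is mapped into itself
  by affine isometries \<open>u \<mapsto> c\<^sub>x + (x b).u\<close>. In finite dimensions such maps have a common fixed point,
  the Chebyshev centre of the set for a Euclidean norm made invariant under all linear isometries.
  Correcting by this fixed point shows that \<open>f\<close> is the restriction of a cocycle to \<open>A\<close>, and evaluating
  the cocycle identity at \<open>a\<^sup>k, a\<^sup>2\<^sup>k, a\<^sup>3\<^sup>k\<close> shows that the coefficient of \<open>f\<^sub>k\<close> vanishes.\<close>

section \<open>Finite-dimensional normed spaces\<close>

lemma closed_span_if_coefficients_bounded:
  fixes B :: "'e::real_normed_vector set"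
  assumes "finite B" and "K > 0"
    and K: "\<And>t. (\<Sum>b\<in>B. \<bar>t b\<bar>) \<le> K * norm (\<Sum>b\<in>B. t b *\<^sub>R b)"
  shows "closed (span B)"
  unfolding closed_sequential_limits
proof (intro allI impI, elim conjE)
  fix u l assume u: "\<forall>n. u n \<in> span B" and "u \<longlonglongrightarrow> l"
  then have "\<forall>n. \<exists>t. u n = (\<Sum>e\<in>B. t e *\<^sub>R e)"
    using span_finite[OF \<open>finite B\<close>] by auto
  then obtain s where s: "\<And>n. u n = (\<Sum>e\<in>B. s n e *\<^sub>R e)"
    by metis
  have "Cauchy u"
    using \<open>u \<longlonglongrightarrow> l\<close> by (rule LIMSEQ_imp_Cauchy)
  have "Cauchy (\<lambda>n. s n e)" if "e \<in> B" for e
  proof (rule metric_CauchyI)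
    fix r :: real assume "r > 0"
    then obtain M where M: "\<And>m n. M \<le> m \<Longrightarrow> M \<le> n \<Longrightarrow> dist (u m) (u n) < r / K"
      using metric_CauchyD[OF \<open>Cauchy u\<close>, of "r / K"] \<open>K > 0\<close> by auto
    show "\<exists>M. \<forall>m\<ge>M. \<forall>n\<ge>M. dist (s m e) (s n e) < r"
    proof (intro exI allI impI)
      fix m n assume "M \<le> m" "M \<le> n"
      have "\<bar>s m e - s n e\<bar> \<le> (\<Sum>e\<in>B. \<bar>s m e - s n e\<bar>)"
        using that \<open>finite B\<close> by (intro member_le_sum) auto
      also have "\<dots> \<le> K * norm (u m - u n)"
        using K[of "\<lambda>e. s m e - s n e"] by (simp add: s scaleR_diff_left sum_subtractf)
      also have "\<dots> < K * (r / K)"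
        using M[OF \<open>M \<le> m\<close> \<open>M \<le> n\<close>] \<open>K > 0\<close> by (intro mult_strict_left_mono) (simp_all add: dist_norm)
      also have "\<dots> = r"
        using \<open>K > 0\<close> by simp
      finally show "dist (s m e) (s n e) < r"
        by (simp add: dist_real_def)
    qed
  qed
  then have "\<forall>e\<in>B. \<exists>l. (\<lambda>n. s n e) \<longlonglongrightarrow> l"
    by (simp add: Cauchy_convergent_iff convergent_def)
  then obtain \<sigma> where \<sigma>: "\<And>e. e \<in> B \<Longrightarrow> (\<lambda>n. s n e) \<longlonglongrightarrow> \<sigma> e"
    by metis
  have "u \<longlonglongrightarrow> (\<Sum>e\<in>B. \<sigma> e *\<^sub>R e)"
    unfolding s by (intro tendsto_sum tendsto_scaleR \<sigma> tendsto_const)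
  then have "l = (\<Sum>e\<in>B. \<sigma> e *\<^sub>R e)"
    using \<open>u \<longlonglongrightarrow> l\<close> LIMSEQ_unique by blast
  then show "l \<in> span B"
    by (simp add: span_sum span_scale span_base)
qed

lemma independent_coefficients_bounded:
  fixes B :: "'e::real_normed_vector set"
  assumes "finite B" and "independent B"
  shows "\<exists>K>0. \<forall>t. (\<Sum>b\<in>B. \<bar>t b\<bar>) \<le> K * norm (\<Sum>b\<in>B. t b *\<^sub>R b)"
  using assms
proof (induction B rule: finite_induct)
  case empty
  show ?case by (auto intro: exI[of _ 1])
next
  case (insert b B)
  then have "independent B" and "b \<notin> span B"
    by (auto simp: independent_insert)
  with insert.IH obtain K where "K > 0"
    and K: "\<And>t. (\<Sum>b\<in>B. \<bar>t b\<bar>) \<le> K * norm (\<Sum>b\<in>B. t b *\<^sub>R b)"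
    by blast
  \<comment> \<open>By the induction hypothesis \<open>span B\<close> is closed, so \<open>b\<close> keeps a positive distance from it.\<close>
  define d where "d = infdist b (span B)"
  have "d > 0"
    unfolding d_def using closed_span_if_coefficients_bounded[OF insert.hyps(1) \<open>K > 0\<close> K]
    by (intro infdist_pos_not_in_closed \<open>b \<notin> span B\<close>) (use span_zero in blast)+
  have d: "d \<le> norm (b - u)" if "u \<in> span B" for u
    unfolding d_def using infdist_le[OF that, of b] by (simp add: dist_norm)
  show ?case
  proof (intro exI[of _ "1 / d + K * (1 + norm b / d)"] conjI allI)
    show "1 / d + K * (1 + norm b / d) > 0"
      using \<open>d > 0\<close> \<open>K > 0\<close> by (simp add: add_pos_nonneg)
    fix t :: "'e \<Rightarrow> real"
    define w where "w = (\<Sum>e\<in>B. t e *\<^sub>R e)"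
    define v where "v = t b *\<^sub>R b + w"
    have \<open>\<bar>t b\<bar> * d \<le> norm v\<close>
    proof (cases "t b = 0")
      case False
      have "v = t b *\<^sub>R (b - (- (1 / t b) *\<^sub>R w))"
        using False by (simp add: v_def scaleR_add_right)
      moreover have "- (1 / t b) *\<^sub>R w \<in> span B"
        unfolding w_def by (intro span_scale span_sum span_base)
      ultimately show ?thesis
        using d[of "- (1 / t b) *\<^sub>R w"] by (simp add: mult_left_mono)
    qed simp
    then have tb: "\<bar>t b\<bar> \<le> norm v / d"
      using \<open>d > 0\<close> by (simp add: pos_le_divide_eq)
    have "norm w \<le> norm v + \<bar>t b\<bar> * norm b"
      using norm_triangle_ineq4[of v "t b *\<^sub>R b"] by (simp add: v_def)
    also have "\<dots> \<le> norm v + norm v / d * norm b"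
      using mult_right_mono[OF tb norm_ge_zero] by simp
    also have "\<dots> = norm v * (1 + norm b / d)"
      by (simp add: algebra_simps)
    finally have "(\<Sum>e\<in>B. \<bar>t e\<bar>) \<le> K * (norm v * (1 + norm b / d))"
      using K[of t] \<open>K > 0\<close> unfolding w_def[symmetric] by (meson mult_left_mono less_imp_le order_trans)
    moreover have "(\<Sum>e\<in>insert b B. \<bar>t e\<bar>) = \<bar>t b\<bar> + (\<Sum>e\<in>B. \<bar>t e\<bar>)"
      and sum_eq_v: "(\<Sum>e\<in>insert b B. t e *\<^sub>R e) = v"
      using insert.hyps by (simp_all add: v_def w_def)
    moreover have "norm v / d + K * (norm v * (1 + norm b / d)) = (1 / d + K * (1 + norm b / d)) * norm v"
      by (simp add: algebra_simps)
    ultimately show "(\<Sum>e\<in>insert b B. \<bar>t e\<bar>) \<le> (1 / d + K * (1 + norm b / d)) * norm (\<Sum>e\<in>insert b B. t e *\<^sub>R e)"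
      unfolding sum_eq_v using tb by linarith
  qed
qed

definition linear_isometries :: "('e::real_normed_vector \<Rightarrow> 'e) set" where
  "linear_isometries = {T. linear T \<and> (\<forall>v. norm (T v) = norm v)}"

lemma id_linear_isometry: "id \<in> linear_isometries"
  by (simp add: linear_isometries_def linear_id)

lemma linear_isometryD:
  assumes "T \<in> linear_isometries"
  shows "linear T" and "norm (T v) = norm v"
  using assms by (simp_all add: linear_isometries_def)

lemma comp_linear_isometry:
  "S \<in> linear_isometries \<Longrightarrow> T \<in> linear_isometries \<Longrightarrow> S \<circ> T \<in> linear_isometries"
  by (simp add: linear_isometries_def linear_compose)

lemma Cauchy_if_dist_le_vanishing:
  fixes x :: "nat \<Rightarrow> 'a::metric_space"
  assumes "\<And>m n. dist (x m) (x n) \<le> \<epsilon> m + \<epsilon> n" and "\<epsilon> \<longlonglongrightarrow> 0"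
  shows "Cauchy x"
proof (rule metric_CauchyI)
  fix r :: real assume "r > 0"
  then obtain M where M: "\<And>n. n \<ge> M \<Longrightarrow> \<bar>\<epsilon> n\<bar> < r / 2"
    using LIMSEQ_D[OF \<open>\<epsilon> \<longlonglongrightarrow> 0\<close>, of "r / 2"] by auto
  show "\<exists>M. \<forall>m\<ge>M. \<forall>n\<ge>M. dist (x m) (x n) < r"
    using assms(1) M by (smt (verit) field_sum_of_halves)
qed

locale finite_basis =
  fixes B :: "'e::banach set"
  assumes finite_B: "finite B" and independent_B: "independent B" and span_B: "span B = UNIV"
begin

definition eucl_norm :: "'e \<Rightarrow> real" where
  "eucl_norm v = L2_set (representation B v) B"

lemma sum_representation: "(\<Sum>b\<in>B. representation B v b *\<^sub>R b) = v"
  using independent_B finite_B span_B by (simp add: real_vector.sum_representation_eq)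

lemma representation_add: "representation B (u + v) b = representation B u b + representation B v b"
  using independent_B span_B by (simp add: real_vector.representation_add)

lemma representation_diff: "representation B (u - v) b = representation B u b - representation B v b"
  using independent_B span_B by (simp add: real_vector.representation_diff)

lemma abs_representation_le_eucl_norm: "b \<in> B \<Longrightarrow> \<bar>representation B v b\<bar> \<le> eucl_norm v"
  unfolding eucl_norm_def using member_le_L2_set[OF finite_B, of b "\<lambda>b. \<bar>representation B v b\<bar>"]
  by (simp add: L2_set_def)

lemma norm_le_if_representation_le:
  assumes "\<And>b. b \<in> B \<Longrightarrow> \<bar>representation B v b\<bar> \<le> \<delta>"
  shows "norm v \<le> \<delta> * (\<Sum>b\<in>B. norm b)"
proof -
  have "norm v \<le> (\<Sum>b\<in>B. \<bar>representation B v b\<bar> * norm b)"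
    using norm_sum[of "\<lambda>b. representation B v b *\<^sub>R b" B] by (simp add: sum_representation)
  also have "\<dots> \<le> (\<Sum>b\<in>B. \<delta> * norm b)"
    by (intro sum_mono mult_right_mono assms) auto
  finally show ?thesis
    by (simp add: sum_distrib_left)
qed

lemma eucl_norm_nonneg: "eucl_norm v \<ge> 0"
  by (simp add: eucl_norm_def)

lemma eucl_norm_bounded: "\<exists>K>0. \<forall>v. eucl_norm v \<le> K * norm v"
proof -
  obtain K where "K > 0" and K: "\<And>t. (\<Sum>b\<in>B. \<bar>t b\<bar>) \<le> K * norm (\<Sum>b\<in>B. t b *\<^sub>R b)"
    using independent_coefficients_bounded[OF finite_B independent_B] by blast
  have "eucl_norm v \<le> K * norm v" for v
    using L2_set_le_sum_abs[of "representation B v" B] K[of "representation B v"]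
    by (simp add: eucl_norm_def sum_representation)
  with \<open>K > 0\<close> show ?thesis
    by blast
qed

lemma norm_le_eucl_norm: "\<exists>c>0. \<forall>v. c * norm v \<le> eucl_norm v"
proof (intro exI conjI allI)
  define S where "S = (\<Sum>b\<in>B. norm b) + 1"
  have "S > 0"
    unfolding S_def by (simp add: add_nonneg_pos sum_nonneg)
  then show "1 / S > 0"
    by simp
  fix v
  have "norm v \<le> eucl_norm v * (\<Sum>b\<in>B. norm b)"
    by (intro norm_le_if_representation_le abs_representation_le_eucl_norm)
  also have "\<dots> \<le> eucl_norm v * S"
    unfolding S_def by (intro mult_left_mono) (simp_all add: eucl_norm_nonneg)
  finally show "1 / S * norm v \<le> eucl_norm v"
    using \<open>S > 0\<close> by (simp add: field_simps)
qed

lemma eucl_norm_triangle: "eucl_norm (u + v) \<le> eucl_norm u + eucl_norm v"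
  unfolding eucl_norm_def representation_add by (rule L2_set_triangle_ineq)

lemma eucl_norm_squared: "(eucl_norm v)\<^sup>2 = (\<Sum>b\<in>B. (representation B v b)\<^sup>2)"
  by (simp add: eucl_norm_def L2_set_def sum_nonneg)

lemma eucl_norm_parallelogram:
  "(eucl_norm (u + v))\<^sup>2 + (eucl_norm (u - v))\<^sup>2 = 2 * (eucl_norm u)\<^sup>2 + 2 * (eucl_norm v)\<^sup>2"
proof -
  have "(representation B u b + representation B v b)\<^sup>2 + (representation B u b - representation B v b)\<^sup>2
      = 2 * (representation B u b)\<^sup>2 + 2 * (representation B v b)\<^sup>2" for b
    by (simp add: power2_eq_square algebra_simps)
  then show ?thesis
    by (simp add: eucl_norm_squared representation_add representation_diff sum_distrib_left
        flip: sum.distrib)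
qed

lemma bounded_sequence_has_close_terms:
  fixes x :: "nat \<Rightarrow> 'e"
  assumes "\<And>n. norm (x n) \<le> R" and "e > 0"
  shows "\<exists>i j. i < j \<and> norm (x i - x j) < e"
proof -
  obtain K where "K > 0" and K: "\<And>v. eucl_norm v \<le> K * norm v"
    using eucl_norm_bounded by blast
  define \<delta> where "\<delta> = e / ((\<Sum>b\<in>B. norm b) + 1)"
  have "\<delta> > 0"
    unfolding \<delta>_def using \<open>e > 0\<close> by (simp add: add_nonneg_pos sum_nonneg)
  define M where "M = \<lceil>K * R / \<delta>\<rceil>"
  \<comment> \<open>pigeonhole on the cubes of side \<open>\<delta>\<close> in coordinates\<close>
  define cell where "cell n = restrict (\<lambda>b. \<lfloor>representation B (x n) b / \<delta>\<rfloor>) B" for n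
  have "range cell \<subseteq> PiE B (\<lambda>_. {-M..M})"
  proof (clarsimp simp: cell_def)
    fix n b assume "b \<in> B"
    have "\<bar>representation B (x n) b\<bar> \<le> K * R"
      using abs_representation_le_eucl_norm[OF \<open>b \<in> B\<close>] K[of "x n"]
        mult_left_mono[OF assms(1) less_imp_le[OF \<open>K > 0\<close>]] by (meson order_trans)
    then have "\<bar>representation B (x n) b / \<delta>\<bar> \<le> K * R / \<delta>"
      using \<open>\<delta> > 0\<close> by (simp add: abs_divide divide_right_mono)
    also have "\<dots> \<le> of_int M"
      unfolding M_def by (rule le_of_int_ceiling)
    finally show "- M \<le> \<lfloor>representation B (x n) b / \<delta>\<rfloor> \<and> \<lfloor>representation B (x n) b / \<delta>\<rfloor> \<le> M"
      by (simp only: abs_le_iff le_floor_iff floor_le_iff) linarith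
  qed
  then have "\<not> inj cell"
    using finite_subset[OF _ finite_PiE[OF finite_B]] finite_imageD[of cell UNIV] by auto
  then obtain i j where "i \<noteq> j" and "cell i = cell j"
    unfolding inj_def by blast
  have "norm (x i - x j) \<le> \<delta> * (\<Sum>b\<in>B. norm b)"
  proof (rule norm_le_if_representation_le)
    fix b assume "b \<in> B"
    then have "\<lfloor>representation B (x i) b / \<delta>\<rfloor> = \<lfloor>representation B (x j) b / \<delta>\<rfloor>"
      using fun_cong[OF \<open>cell i = cell j\<close>, of b] by (simp add: cell_def)
    then have "\<bar>representation B (x i) b / \<delta> - representation B (x j) b / \<delta>\<bar> \<le> 1"
      by linarith
    then show "\<bar>representation B (x i - x j) b\<bar> \<le> \<delta>"
      using \<open>\<delta> > 0\<close> by (simp add: representation_diff abs_divide field_simps flip: diff_divide_distrib)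
  qed
  also have "\<dots> < e"
    unfolding \<delta>_def using \<open>e > 0\<close> sum_nonneg[of B norm] by (simp add: field_simps)
  finally have close: "norm (x i - x j) < e" .
  show ?thesis
  proof (cases "i < j")
    case True
    with close show ?thesis by blast
  next
    case False
    with \<open>i \<noteq> j\<close> have "j < i" by simp
    moreover have "norm (x j - x i) < e"
      using close by (simp add: norm_minus_commute)
    ultimately show ?thesis by blast
  qed
qed

definition invariant_norm :: "'e \<Rightarrow> real" where
  "invariant_norm v = (SUP T\<in>linear_isometries. eucl_norm (T v))"

lemma bdd_above_eucl_norm_isometries: "bdd_above ((\<lambda>T. eucl_norm (T v)) ` linear_isometries)"
proof -
  obtain K where K: "\<And>v. eucl_norm v \<le> K * norm v"
    using eucl_norm_bounded by blast
  show ?thesis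
    by (rule bdd_aboveI2[of _ _ "K * norm v"]) (use K linear_isometryD(2) in metis)
qed

lemma eucl_norm_le_invariant_norm: "T \<in> linear_isometries \<Longrightarrow> eucl_norm (T v) \<le> invariant_norm v"
  unfolding invariant_norm_def by (rule cSUP_upper[OF _ bdd_above_eucl_norm_isometries])

lemma invariant_norm_le: "(\<And>T :: 'e \<Rightarrow> 'e. T \<in> linear_isometries \<Longrightarrow> eucl_norm (T v) \<le> M) \<Longrightarrow> invariant_norm v \<le> M"
  unfolding invariant_norm_def using id_linear_isometry by (intro cSUP_least) auto

lemma invariant_norm_nonneg: "invariant_norm v \<ge> 0"
  using eucl_norm_le_invariant_norm[OF id_linear_isometry, of v] eucl_norm_nonneg[of v] by simp

lemma invariant_norm_bounded: "\<exists>K>0. \<forall>v. invariant_norm v \<le> K * norm v"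
proof -
  obtain K where "K > 0" and K: "\<And>v. eucl_norm v \<le> K * norm v"
    using eucl_norm_bounded by blast
  have "invariant_norm v \<le> K * norm v" for v
    by (rule invariant_norm_le) (use K linear_isometryD(2) in metis)
  with \<open>K > 0\<close> show ?thesis
    by blast
qed

lemma invariant_norm_triangle: "invariant_norm (u + v) \<le> invariant_norm u + invariant_norm v"
proof (rule invariant_norm_le)
  fix T :: "'e \<Rightarrow> 'e" assume T: "T \<in> linear_isometries"
  then have "eucl_norm (T (u + v)) = eucl_norm (T u + T v)"
    by (simp add: linear_isometries_def linear_add)
  also have "\<dots> \<le> invariant_norm u + invariant_norm v"
    using eucl_norm_triangle eucl_norm_le_invariant_norm[OF T] by (meson add_mono order_trans)
  finally show "eucl_norm (T (u + v)) \<le> invariant_norm u + invariant_norm v" .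
qed

lemma invariant_norm_isometry_le: "T \<in> linear_isometries \<Longrightarrow> invariant_norm (T v) \<le> invariant_norm v"
  using eucl_norm_le_invariant_norm[OF comp_linear_isometry] by (auto intro: invariant_norm_le)

text \<open>The parallelogram law of the Euclidean norm survives the supremum as an inequality.\<close>
lemma invariant_norm_uniformly_convex:
  "\<exists>\<gamma>>0. \<forall>u v. 2 * (invariant_norm u)\<^sup>2 + \<gamma> * (norm v)\<^sup>2 \<le> (invariant_norm (u + v))\<^sup>2 + (invariant_norm (u - v))\<^sup>2"
proof -
  obtain c where "c > 0" and c: "\<And>v. c * norm v \<le> eucl_norm v"
    using norm_le_eucl_norm by blast
  have "2 * (invariant_norm u)\<^sup>2 + 2 * c\<^sup>2 * (norm v)\<^sup>2 \<le> (invariant_norm (u + v))\<^sup>2 + (invariant_norm (u - v))\<^sup>2" for u v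
  proof -
    define M where "M = ((invariant_norm (u + v))\<^sup>2 + (invariant_norm (u - v))\<^sup>2) / 2 - c\<^sup>2 * (norm v)\<^sup>2"
    have "(eucl_norm (T u))\<^sup>2 \<le> M" if T: "T \<in> linear_isometries" for T :: "'e \<Rightarrow> 'e"
    proof -
      have "T (u + v) = T u + T v" "T (u - v) = T u - T v"
        using T by (simp_all add: linear_isometries_def linear_add linear_diff)
      then have "2 * (eucl_norm (T u))\<^sup>2 + 2 * (eucl_norm (T v))\<^sup>2
          = (eucl_norm (T (u + v)))\<^sup>2 + (eucl_norm (T (u - v)))\<^sup>2"
        by (simp add: eucl_norm_parallelogram)
      also have "\<dots> \<le> (invariant_norm (u + v))\<^sup>2 + (invariant_norm (u - v))\<^sup>2"
        using eucl_norm_le_invariant_norm[OF T] eucl_norm_nonneg by (intro add_mono power_mono) auto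
      finally have "2 * (eucl_norm (T u))\<^sup>2 + 2 * (eucl_norm (T v))\<^sup>2
          \<le> (invariant_norm (u + v))\<^sup>2 + (invariant_norm (u - v))\<^sup>2" .
      moreover have "(c * norm v)\<^sup>2 \<le> (eucl_norm (T v))\<^sup>2"
        using c[of "T v"] T \<open>c > 0\<close> by (intro power_mono) (auto simp: linear_isometries_def)
      ultimately show ?thesis
        unfolding M_def power_mult_distrib by (simp add: field_simps)
    qed
    then have "invariant_norm u \<le> sqrt M"
      using eucl_norm_nonneg by (intro invariant_norm_le) (simp add: real_le_rsqrt)
    then have "sqrt ((invariant_norm u)\<^sup>2) \<le> sqrt M"
      using invariant_norm_nonneg by simp
    then have "(invariant_norm u)\<^sup>2 \<le> M"
      by (simp only: real_sqrt_le_iff)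
    then show ?thesis
      unfolding M_def by (simp add: field_simps)
  qed
  moreover have "2 * c\<^sup>2 > 0"
    using \<open>c > 0\<close> by simp
  ultimately show ?thesis
    by blast
qed

section \<open>Common fixed points of affine isometries\<close>

text \<open>The radius is squared so that the parallelogram law applies directly.\<close>
definition chebyshev_radius :: "'e set \<Rightarrow> 'e \<Rightarrow> real" where
  "chebyshev_radius \<Omega> c = (SUP y\<in>\<Omega>. (invariant_norm (c - y))\<^sup>2)"

context
  fixes \<Omega> :: "'e set"
  assumes bounded_\<Omega>: "bounded \<Omega>" and nonempty_\<Omega>: "\<Omega> \<noteq> {}"
begin

lemma bdd_above_chebyshev_radius: "bdd_above ((\<lambda>y. (invariant_norm (c - y))\<^sup>2) ` \<Omega>)"
proof -
  obtain R where R: "\<And>y. y \<in> \<Omega> \<Longrightarrow> norm y \<le> R"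
    using bounded_\<Omega> by (auto simp: bounded_iff)
  obtain K where "K > 0" and K: "\<And>v. invariant_norm v \<le> K * norm v"
    using invariant_norm_bounded by blast
  have "(invariant_norm (c - y))\<^sup>2 \<le> (K * (norm c + R))\<^sup>2" if "y \<in> \<Omega>" for y
  proof (rule power_mono[OF _ invariant_norm_nonneg])
    have "norm (c - y) \<le> norm c + R"
      using norm_triangle_ineq4[of c y] R[OF that] by linarith
    then show "invariant_norm (c - y) \<le> K * (norm c + R)"
      using K[of "c - y"] \<open>K > 0\<close> by (meson mult_left_mono less_imp_le order_trans)
  qed
  then show ?thesis
    by (rule bdd_aboveI2)
qed

lemma chebyshev_radius_upper: "y \<in> \<Omega> \<Longrightarrow> (invariant_norm (c - y))\<^sup>2 \<le> chebyshev_radius \<Omega> c"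
  unfolding chebyshev_radius_def by (rule cSUP_upper[OF _ bdd_above_chebyshev_radius])

lemma chebyshev_radius_least: "(\<And>y. y \<in> \<Omega> \<Longrightarrow> (invariant_norm (c - y))\<^sup>2 \<le> M) \<Longrightarrow> chebyshev_radius \<Omega> c \<le> M"
  unfolding chebyshev_radius_def by (rule cSUP_least[OF nonempty_\<Omega>])

lemma chebyshev_radius_nonneg: "chebyshev_radius \<Omega> c \<ge> 0"
  using nonempty_\<Omega> chebyshev_radius_upper by (meson ex_in_conv order_trans zero_le_power2)

lemma invariant_norm_le_sqrt_chebyshev_radius: "y \<in> \<Omega> \<Longrightarrow> invariant_norm (c - y) \<le> sqrt (chebyshev_radius \<Omega> c)"
  using chebyshev_radius_upper by (simp add: real_le_rsqrt)

lemma sqrt_chebyshev_radius_le: "\<exists>K. \<forall>c c'. sqrt (chebyshev_radius \<Omega> c) \<le> sqrt (chebyshev_radius \<Omega> c') + K * norm (c - c')"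
proof -
  obtain K where "K > 0" and K: "\<And>v. invariant_norm v \<le> K * norm v"
    using invariant_norm_bounded by blast
  have "sqrt (chebyshev_radius \<Omega> c) \<le> sqrt (chebyshev_radius \<Omega> c') + K * norm (c - c')" for c c'
  proof -
    have "chebyshev_radius \<Omega> c \<le> (sqrt (chebyshev_radius \<Omega> c') + K * norm (c - c'))\<^sup>2"
    proof (rule chebyshev_radius_least, rule power_mono[OF _ invariant_norm_nonneg])
      fix y assume "y \<in> \<Omega>"
      have "invariant_norm (c - y) \<le> invariant_norm (c' - y) + invariant_norm (c - c')"
        using invariant_norm_triangle[of "c' - y" "c - c'"] by simp
      then show "invariant_norm (c - y) \<le> sqrt (chebyshev_radius \<Omega> c') + K * norm (c - c')"
        using invariant_norm_le_sqrt_chebyshev_radius[OF \<open>y \<in> \<Omega>\<close>, of c']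
          K[of "c - c'"] by linarith
    qed
    then have "sqrt (chebyshev_radius \<Omega> c) \<le> sqrt ((sqrt (chebyshev_radius \<Omega> c') + K * norm (c - c'))\<^sup>2)"
      by (rule real_sqrt_le_mono)
    moreover have "sqrt (chebyshev_radius \<Omega> c') + K * norm (c - c') \<ge> 0"
      using \<open>K > 0\<close> chebyshev_radius_nonneg by simp
    ultimately show ?thesis
      by simp
  qed
  then show ?thesis
    by blast
qed

lemma chebyshev_radius_midpoint:
  "\<exists>\<gamma>>0. \<forall>c c'. 2 * chebyshev_radius \<Omega> (midpoint c c') + \<gamma> * (norm (c - c'))\<^sup>2 \<le> chebyshev_radius \<Omega> c + chebyshev_radius \<Omega> c'"
proof -
  obtain \<gamma> where "\<gamma> > 0" and \<gamma>: "\<And>u v. 2 * (invariant_norm u)\<^sup>2 + \<gamma> * (norm v)\<^sup>2 \<le> (invariant_norm (u + v))\<^sup>2 + (invariant_norm (u - v))\<^sup>2"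
    using invariant_norm_uniformly_convex by blast
  have "2 * chebyshev_radius \<Omega> (midpoint c c') + \<gamma> / 4 * (norm (c - c'))\<^sup>2 \<le> chebyshev_radius \<Omega> c + chebyshev_radius \<Omega> c'" for c c'
  proof -
    define v where "v = c - midpoint c c'"
    define S where "S = chebyshev_radius \<Omega> c + chebyshev_radius \<Omega> c' - \<gamma> / 4 * (norm (c - c'))\<^sup>2"
    have "norm v = norm (c - c') / 2"
      using dist_midpoint(1)[of c c'] by (simp only: v_def dist_norm)
    then have norm_v: "\<gamma> / 4 * (norm (c - c'))\<^sup>2 = \<gamma> * (norm v)\<^sup>2"
      unfolding \<open>norm v = norm (c - c') / 2\<close> by (simp add: power_divide)
    have shift: "midpoint c c' - y + v = c - y" "midpoint c c' - y - v = c' - y" for y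
      using midpoint_plus_self[of c c'] unfolding v_def by (simp_all add: algebra_simps)
    have "2 * (invariant_norm (midpoint c c' - y))\<^sup>2 \<le> S" if "y \<in> \<Omega>" for y
      using \<gamma>[of "midpoint c c' - y" v, unfolded shift] chebyshev_radius_upper[OF that, of c]
        chebyshev_radius_upper[OF that, of c'] unfolding S_def norm_v by linarith
    then have "chebyshev_radius \<Omega> (midpoint c c') \<le> S / 2"
      by (intro chebyshev_radius_least) (simp add: field_simps)
    then show ?thesis
      using S_def by linarith
  qed
  moreover have "\<gamma> / 4 > 0"
    using \<open>\<gamma> > 0\<close> by simp
  ultimately show ?thesis
    by blast
qed

lemma chebyshev_radius_almost_minimizing_Cauchy:
  assumes m: "\<And>c. m \<le> chebyshev_radius \<Omega> c" and cs: "\<And>n. chebyshev_radius \<Omega> (cs n) < m + 1 / Suc n"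
  shows "Cauchy cs"
proof -
  obtain \<gamma> where "\<gamma> > 0" and \<gamma>: "\<And>c c'. 2 * chebyshev_radius \<Omega> (midpoint c c') + \<gamma> * (norm (c - c'))\<^sup>2
      \<le> chebyshev_radius \<Omega> c + chebyshev_radius \<Omega> c'"
    using chebyshev_radius_midpoint by blast
  define \<epsilon> where "\<epsilon> n = sqrt (1 / Suc n / \<gamma>)" for n
  have "dist (cs i) (cs j) \<le> \<epsilon> i + \<epsilon> j" for i j
  proof -
    have "\<gamma> * (norm (cs i - cs j))\<^sup>2 \<le> 1 / Suc i + 1 / Suc j"
      using \<gamma>[of "cs i" "cs j"] m[of "midpoint (cs i) (cs j)"] cs[of i] cs[of j] by linarith
    then have "(norm (cs i - cs j))\<^sup>2 \<le> (1 / Suc i + 1 / Suc j) / \<gamma>"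
      using \<open>\<gamma> > 0\<close> by (simp add: pos_le_divide_eq mult.commute)
    then have "norm (cs i - cs j) \<le> sqrt (1 / Suc i / \<gamma> + 1 / Suc j / \<gamma>)"
      by (simp add: real_le_rsqrt add_divide_distrib)
    also have "\<dots> \<le> \<epsilon> i + \<epsilon> j"
      unfolding \<epsilon>_def using \<open>\<gamma> > 0\<close> by (intro sqrt_add_le_add_sqrt) simp_all
    finally show ?thesis
      by (simp add: dist_norm)
  qed
  moreover have "\<epsilon> \<longlonglongrightarrow> sqrt (0 / \<gamma>)"
    unfolding \<epsilon>_def using LIMSEQ_inverse_real_of_nat \<open>\<gamma> > 0\<close>
    by (intro tendsto_intros) (simp_all add: inverse_eq_divide)
  ultimately show ?thesis
    by (intro Cauchy_if_dist_le_vanishing) simp_all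
qed

lemma chebyshev_radius_minimum_exists: "\<exists>c. \<forall>c'. chebyshev_radius \<Omega> c \<le> chebyshev_radius \<Omega> c'"
proof -
  obtain K where K: "\<And>c c'. sqrt (chebyshev_radius \<Omega> c) \<le> sqrt (chebyshev_radius \<Omega> c') + K * norm (c - c')"
    using sqrt_chebyshev_radius_le by blast
  define m where "m = (INF c. chebyshev_radius \<Omega> c)"
  have "bdd_below (range (chebyshev_radius \<Omega>))"
    using chebyshev_radius_nonneg by (intro bdd_belowI2)
  then have m_le: "m \<le> chebyshev_radius \<Omega> c" for c
    unfolding m_def by (simp add: cINF_lower)
  have "\<exists>c. chebyshev_radius \<Omega> c < m + 1 / Suc n" for n
  proof -
    have "\<exists>x\<in>range (chebyshev_radius \<Omega>). x < m + 1 / Suc n"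
      unfolding m_def by (rule cInf_lessD) auto
    then show ?thesis
      by blast
  qed
  then obtain cs where cs: "\<And>n. chebyshev_radius \<Omega> (cs n) < m + 1 / Suc n"
    by metis
  then obtain c where "cs \<longlonglongrightarrow> c"
    using chebyshev_radius_almost_minimizing_Cauchy[OF m_le] Cauchy_convergent_iff convergent_def by blast
  have "sqrt (chebyshev_radius \<Omega> c) \<le> sqrt (m + 1 / Suc n) + K * norm (c - cs n)" for n
    using K[of c "cs n"] real_sqrt_le_mono[OF less_imp_le[OF cs[of n]]] by linarith
  moreover have "(\<lambda>n. sqrt (m + 1 / Suc n) + K * norm (c - cs n)) \<longlonglongrightarrow> sqrt (m + 0) + K * norm (c - c)"
    using \<open>cs \<longlonglongrightarrow> c\<close> LIMSEQ_inverse_real_of_nat by (intro tendsto_intros) (simp_all add: inverse_eq_divide)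
  ultimately have "sqrt (chebyshev_radius \<Omega> c) \<le> sqrt (m + 0) + K * norm (c - c)"
    by (intro LIMSEQ_le_const) auto
  then have "sqrt (chebyshev_radius \<Omega> c) \<le> sqrt m"
    by simp
  then show ?thesis
    using m_le by (meson real_sqrt_le_iff order_trans)
qed

lemma chebyshev_radius_minimum_unique:
  assumes "\<forall>c'. chebyshev_radius \<Omega> c \<le> chebyshev_radius \<Omega> c'" and "\<forall>c'. chebyshev_radius \<Omega> d \<le> chebyshev_radius \<Omega> c'"
  shows "c = d"
proof -
  obtain \<gamma> where "\<gamma> > 0" and \<gamma>: "\<And>c c'. 2 * chebyshev_radius \<Omega> (midpoint c c') + \<gamma> * (norm (c - c'))\<^sup>2
      \<le> chebyshev_radius \<Omega> c + chebyshev_radius \<Omega> c'"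
    using chebyshev_radius_midpoint by blast
  have "\<gamma> * (norm (c - d))\<^sup>2 \<le> 0"
    using \<gamma>[of c d] assms by (smt (verit))
  with \<open>\<gamma> > 0\<close> show "c = d"
    by (simp add: mult_le_0_iff)
qed

end

lemma isometric_self_map_approximately_onto:
  fixes \<beta> :: "'e \<Rightarrow> 'e"
  assumes "bounded \<Omega>" and "\<beta> ` \<Omega> \<subseteq> \<Omega>" and iso: "\<And>u v. norm (\<beta> u - \<beta> v) = norm (u - v)"
    and "y \<in> \<Omega>" and "e > 0"
  shows "\<exists>y'\<in>\<Omega>. norm (\<beta> y' - y) < e"
proof -
  have orbit: "(\<beta> ^^ n) y \<in> \<Omega>" for n
    using assms(2,4) by (induction n) auto
  obtain R where "\<And>x. x \<in> \<Omega> \<Longrightarrow> norm x \<le> R"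
    using \<open>bounded \<Omega>\<close> unfolding bounded_iff by blast
  then have "norm ((\<beta> ^^ n) y) \<le> R" for n
    using orbit by simp
  then obtain i k where "i < k" and close: "norm ((\<beta> ^^ i) y - (\<beta> ^^ k) y) < e"
    using bounded_sequence_has_close_terms[of "\<lambda>n. (\<beta> ^^ n) y" R e] \<open>e > 0\<close> by blast
  then obtain d where k: "k = i + Suc d"
    using less_imp_Suc_add by (metis add_Suc_right)
  have iterate_iso: "norm ((\<beta> ^^ n) u - (\<beta> ^^ n) v) = norm (u - v)" for n u v
    by (induction n) (simp_all add: iso)
  have "(\<beta> ^^ k) y = (\<beta> ^^ i) ((\<beta> ^^ Suc d) y)"
    unfolding k funpow_add by simp
  then have "norm (y - (\<beta> ^^ Suc d) y) < e"
    using close iterate_iso[of i y "(\<beta> ^^ Suc d) y"] by simp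
  then have "norm (y - \<beta> ((\<beta> ^^ d) y)) < e"
    by simp
  then show ?thesis
    using orbit[of d] by (auto simp: norm_minus_commute)
qed

text \<open>The map need not be onto \<open>\<Omega>\<close>: density of its image, obtained by recurrence, suffices.\<close>
lemma chebyshev_radius_affine_isometry_le:
  assumes "bounded \<Omega>" and "\<Omega> \<noteq> {}" and T: "T \<in> linear_isometries"
    and into: "\<And>v. v \<in> \<Omega> \<Longrightarrow> w + T v \<in> \<Omega>"
  shows "chebyshev_radius \<Omega> (w + T c) \<le> chebyshev_radius \<Omega> c"
proof (rule chebyshev_radius_least[OF assms(1,2)])
  fix y assume "y \<in> \<Omega>"
  obtain K where "K > 0" and K: "\<And>v. invariant_norm v \<le> K * norm v"
    using invariant_norm_bounded by blast
  have "invariant_norm (w + T c - y) \<le> sqrt (chebyshev_radius \<Omega> c) + e" if "e > 0" for e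
  proof -
    have "norm ((w + T u) - (w + T v)) = norm (u - v)" for u v
      using T by (simp add: linear_isometryD linear_diff flip: linear_diff)
    then obtain y' where "y' \<in> \<Omega>" and y': "norm (w + T y' - y) < e / K"
      using isometric_self_map_approximately_onto[of \<Omega> "\<lambda>v. w + T v" y "e / K"]
        assms(1) into \<open>y \<in> \<Omega>\<close> \<open>e > 0\<close> \<open>K > 0\<close> by auto
    have "w + T c - y = T (c - y') + (w + T y' - y)"
      using linear_isometryD(1)[OF T] by (simp add: linear_diff)
    then have "invariant_norm (w + T c - y) \<le> invariant_norm (T (c - y')) + invariant_norm (w + T y' - y)"
      by (metis invariant_norm_triangle)
    also have "\<dots> \<le> sqrt (chebyshev_radius \<Omega> c) + K * (e / K)"
      using invariant_norm_isometry_le[OF T, of "c - y'"] invariant_norm_le_sqrt_chebyshev_radius[OF assms(1,2) \<open>y' \<in> \<Omega>\<close>, of c]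
        K[of "w + T y' - y"] mult_strict_left_mono[OF y' \<open>K > 0\<close>] by linarith
    finally show ?thesis
      using \<open>K > 0\<close> by simp
  qed
  then have "invariant_norm (w + T c - y) \<le> sqrt (chebyshev_radius \<Omega> c)"
    by (rule field_le_epsilon)
  then show "(invariant_norm (w + T c - y))\<^sup>2 \<le> chebyshev_radius \<Omega> c"
    using invariant_norm_nonneg chebyshev_radius_nonneg[OF assms(1,2)] by (metis power_mono real_sqrt_pow2)
qed

end

theorem affine_isometries_common_fixed_point:
  fixes \<Omega> :: "'e::banach set" and L :: "'j \<Rightarrow> 'e \<Rightarrow> 'e"
  assumes "finite_dimensional_space TYPE('e)" and "bounded \<Omega>" and "\<Omega> \<noteq> {}"
    and "\<And>j. j \<in> J \<Longrightarrow> L j \<in> linear_isometries"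
    and "\<And>j v. j \<in> J \<Longrightarrow> v \<in> \<Omega> \<Longrightarrow> w j + L j v \<in> \<Omega>"
  shows "\<exists>p. \<forall>j\<in>J. w j + L j p = p"
proof -
  obtain S :: "'e set" where "finite S" and "span S = UNIV"
    using assms(1) unfolding finite_dimensional_space_def by blast
  obtain B where "B \<subseteq> S" and "independent B" and "S \<subseteq> span B"
    by (rule maximal_independent_subset)
  then interpret finite_basis B
    using \<open>finite S\<close> \<open>span S = UNIV\<close> span_minimal[of S "span B"]
    by unfold_locales (auto intro: finite_subset)
  obtain c where c: "\<forall>c'. chebyshev_radius \<Omega> c \<le> chebyshev_radius \<Omega> c'"
    using chebyshev_radius_minimum_exists[OF assms(2,3)] by blast
  have "w j + L j c = c" if "j \<in> J" for j
  proof (rule chebyshev_radius_minimum_unique[OF assms(2,3) _ c])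
    show "\<forall>c'. chebyshev_radius \<Omega> (w j + L j c) \<le> chebyshev_radius \<Omega> c'"
      using chebyshev_radius_affine_isometry_le[OF assms(2,3) assms(4,5)[OF that]] c by (meson order_trans)
  qed
  then show ?thesis
    by blast
qed

section \<open>Cocycles and bump functions\<close>

definition cocycle :: "('g, 'b) monoid_scheme \<Rightarrow> 'g set \<Rightarrow> ('g \<Rightarrow> 'e::banach \<Rightarrow> 'e) \<Rightarrow> ('g \<Rightarrow> 'e) \<Rightarrow> bool" where
  "cocycle G H \<rho> z \<longleftrightarrow> (\<forall>g\<in>H. \<forall>h\<in>H. z (g \<otimes>\<^bsub>G\<^esub> h) = z g + \<rho> g (z h))"

lemma banach_moduleD:
  assumes "banach_module G \<rho>"
  shows "g \<in> carrier G \<Longrightarrow> linear (\<rho> g)" and "g \<in> carrier G \<Longrightarrow> norm (\<rho> g v) = norm v"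
    and "\<rho> \<one>\<^bsub>G\<^esub> = id"
    and "g \<in> carrier G \<Longrightarrow> h \<in> carrier G \<Longrightarrow> \<rho> (g \<otimes>\<^bsub>G\<^esub> h) v = \<rho> g (\<rho> h v)"
  using assms by (auto simp: banach_module_def)

lemma banach_module_linear_isometry:
  "banach_module G \<rho> \<Longrightarrow> g \<in> carrier G \<Longrightarrow> \<rho> g \<in> linear_isometries"
  by (simp add: banach_module_def linear_isometries_def)

lemma cocycle_diff_of_equal_coboundaries:
  assumes "banach_module G \<rho>"
    and "\<And>g h. g \<in> carrier G \<Longrightarrow> h \<in> carrier G \<Longrightarrow> cob1 G \<rho> F (g, h) = cob1 G \<rho> \<phi> (g, h)"
  shows "cocycle G (carrier G) \<rho> (\<lambda>g. F g - \<phi> g)"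
  unfolding cocycle_def
proof (intro ballI)
  fix g h assume "g \<in> carrier G" "h \<in> carrier G"
  with assms(2) have "F g + \<rho> g (F h) - F (g \<otimes>\<^bsub>G\<^esub> h) = \<phi> g + \<rho> g (\<phi> h) - \<phi> (g \<otimes>\<^bsub>G\<^esub> h)"
    by (simp add: cob1_def)
  with banach_moduleD(1)[OF assms(1) \<open>g \<in> carrier G\<close>]
  show "F (g \<otimes>\<^bsub>G\<^esub> h) - \<phi> (g \<otimes>\<^bsub>G\<^esub> h) = F g - \<phi> g + \<rho> g (F h - \<phi> h)"
    by (simp add: linear_diff algebra_simps)
qed

lemma cocycle_add_coboundary:
  assumes "group G" and "banach_module G \<rho>" and "cocycle G (carrier G) \<rho> z"
  shows "cocycle G (carrier G) \<rho> (\<lambda>g. z g + p - \<rho> g p)"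
  using assms by (simp add: cocycle_def banach_moduleD linear_add linear_diff group.is_monoid
      monoid.m_closed algebra_simps)

lemma cocycle_one:
  assumes "group G" and "banach_module G \<rho>" and "cocycle G (carrier G) \<rho> z"
  shows "z \<one>\<^bsub>G\<^esub> = 0"
proof -
  have "\<one>\<^bsub>G\<^esub> \<in> carrier G"
    using assms(1) by (simp add: group.is_monoid)
  with assms(3) have "z (\<one>\<^bsub>G\<^esub> \<otimes>\<^bsub>G\<^esub> \<one>\<^bsub>G\<^esub>) = z \<one>\<^bsub>G\<^esub> + \<rho> \<one>\<^bsub>G\<^esub> (z \<one>\<^bsub>G\<^esub>)"
    unfolding cocycle_def by blast
  with \<open>\<one>\<^bsub>G\<^esub> \<in> carrier G\<close> show ?thesis
    using assms(1) banach_moduleD(3)[OF assms(2)] by (simp add: group.is_monoid)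
qed

lemma vector_double_zero: "v + v = 0 \<longleftrightarrow> (v :: 'a::real_vector) = 0"
  by (simp flip: scaleR_2)

text \<open>Alternation of \<open>f\<close> together with \<open>Z (x b) = Z x + x.Z b\<close> forces every letter to reverse \<open>Z b\<close>.\<close>
lemma cocycle_through_letters_reversed:
  fixes G :: "('g, 'b) monoid_scheme" (structure) and \<rho> :: "'g \<Rightarrow> 'e::banach \<Rightarrow> 'e"
  assumes "group G" and bm: "banach_module G \<rho>" and "subgroup A G"
    and Z: "cocycle G (carrier G) \<rho> Z" and f: "alternating G A \<rho> f"
    and "b \<in> carrier G" and Zf: "\<And>x. x \<in> A - {\<one>} \<Longrightarrow> Z (x \<otimes> b) = f x"
    and y: "y \<in> A - {\<one>}"
  shows "\<rho> y (Z b) = - Z b"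
proof -
  interpret group G by fact
  have A_carrier: "x \<in> carrier G" if "x \<in> A" for x
    using that subgroup.subset[OF \<open>subgroup A G\<close>] by blast
  have f_letter: "f x = Z x + \<rho> x (Z b)" if "x \<in> A - {\<one>}" for x
    using Zf[OF that] Z \<open>b \<in> carrier G\<close> A_carrier that unfolding cocycle_def by auto
  have yC: "y \<in> carrier G" and "inv y \<in> A - {\<one>}"
    using y A_carrier subgroup.m_inv_closed[OF \<open>subgroup A G\<close>] by auto
  have "0 = f y + \<rho> y (f (inv y))"
    using f y unfolding alternating_def by auto
  also have "\<dots> = (Z y + \<rho> y (Z (inv y))) + \<rho> y (\<rho> (inv y) (Z b)) + \<rho> y (Z b)"
    using f_letter[OF y] f_letter[OF \<open>inv y \<in> A - {\<one>}\<close>] banach_moduleD(1)[OF bm yC]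
    by (simp add: linear_add algebra_simps)
  also have "Z y + \<rho> y (Z (inv y)) = 0"
    using Z yC cocycle_one[OF \<open>group G\<close> bm Z] unfolding cocycle_def by (metis inv_closed r_inv)
  also have "\<rho> y (\<rho> (inv y) (Z b)) = Z b"
    using banach_moduleD(3)[OF bm] banach_moduleD(4)[OF bm yC inv_closed[OF yC], symmetric] yC by simp
  finally show ?thesis
    by (simp add: eq_neg_iff_add_eq_0 add.commute)
qed

lemma alternating_eq_cocycle_through_letters:
  fixes G :: "('g, 'b) monoid_scheme" (structure) and \<rho> :: "'g \<Rightarrow> 'e::banach \<Rightarrow> 'e"
  assumes "group G" and bm: "banach_module G \<rho>" and "subgroup A G"
    and Z: "cocycle G (carrier G) \<rho> Z" and f: "alternating G A \<rho> f"
    and "b \<in> carrier G" and Zf: "\<And>x. x \<in> A - {\<one>} \<Longrightarrow> Z (x \<otimes> b) = f x"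
    and "x\<^sub>0 \<in> A" and "x\<^sub>0 \<otimes> x\<^sub>0 \<noteq> \<one>"
    and "x \<in> A"
  shows "f x = Z x"
proof -
  interpret group G by fact
  note reverse = cocycle_through_letters_reversed[OF assms(1-7)]
  have A_carrier: "y \<in> carrier G" if "y \<in> A" for y
    using that subgroup.subset[OF \<open>subgroup A G\<close>] by blast
  have "x\<^sub>0 \<noteq> \<one>" and "x\<^sub>0 \<in> carrier G"
    using assms(8,9) A_carrier by auto
  then have "Z b = \<rho> x\<^sub>0 (\<rho> x\<^sub>0 (Z b))"
    using reverse[of x\<^sub>0] assms(8) banach_moduleD(1)[OF bm] by (simp add: linear_neg)
  also have "\<dots> = - Z b"
    using reverse[of "x\<^sub>0 \<otimes> x\<^sub>0"] assms(8,9) \<open>x\<^sub>0 \<in> carrier G\<close> banach_moduleD(4)[OF bm]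
      subgroup.m_closed[OF \<open>subgroup A G\<close>] by simp
  finally have "Z b + Z b = 0"
    by (simp add: eq_neg_iff_add_eq_0)
  then have "Z b = 0"
    by (simp only: vector_double_zero)
  show ?thesis
  proof (cases "x = \<one>")
    case True
    have "f \<one> + f \<one> = 0"
      using f banach_moduleD(3)[OF bm] subgroup.one_closed[OF \<open>subgroup A G\<close>] unfolding alternating_def by force
    then show ?thesis
      using True cocycle_one[OF \<open>group G\<close> bm Z] by (simp only: vector_double_zero)
  next
    case False
    then have "f x = Z (x \<otimes> b)"
      using Zf \<open>x \<in> A\<close> by simp
    also have "\<dots> = Z x"
      using Z \<open>b \<in> carrier G\<close> \<open>x \<in> A\<close> A_carrier \<open>Z b = 0\<close> banach_moduleD(1)[OF bm]
      unfolding cocycle_def by (simp add: linear_0)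
    finally show ?thesis .
  qed
qed

definition bump :: "('g, 'b) monoid_scheme \<Rightarrow> ('g \<Rightarrow> 'e::banach \<Rightarrow> 'e) \<Rightarrow> 'g \<Rightarrow> 'e \<Rightarrow> 'g \<Rightarrow> 'e" where
  "bump G \<rho> x v g = (if g = x then v else if g = inv\<^bsub>G\<^esub> x then - \<rho> (inv\<^bsub>G\<^esub> x) v else 0)"

lemma norm_bump_le:
  assumes "banach_module G \<rho>" and "x \<in> carrier G" and "group G"
  shows "norm (bump G \<rho> x v g) \<le> norm v"
  using banach_moduleD(2)[OF assms(1) group.inv_closed[OF assms(3,2)]] by (simp add: bump_def)

lemma quasicocycle_if_bounded:
  assumes "banach_module G \<rho>" and "H \<subseteq> carrier G" and "\<And>g. norm (f g) \<le> C"
  shows "quasicocycle G H \<rho> f"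
  unfolding quasicocycle_def
proof (intro exI[of _ "3 * C"] ballI)
  fix g h assume "g \<in> H" "h \<in> H"
  have "norm (f (g \<otimes>\<^bsub>G\<^esub> h) - f g - \<rho> g (f h)) \<le> norm (f (g \<otimes>\<^bsub>G\<^esub> h)) + norm (f g) + norm (\<rho> g (f h))"
    by (meson norm_triangle_ineq4 add_mono order_trans order_refl)
  also have "\<dots> \<le> 3 * C"
    using assms(3)[of "g \<otimes>\<^bsub>G\<^esub> h"] assms(3)[of g] assms(3)[of h] \<open>g \<in> H\<close> assms(2)
      banach_moduleD(2)[OF assms(1)] by (simp add: subset_iff)
  finally show "norm (f (g \<otimes>\<^bsub>G\<^esub> h) - f g - \<rho> g (f h)) \<le> 3 * C" .
qed

lemma bump_alternating:
  fixes G :: "('g, 'b) monoid_scheme" (structure) and \<rho> :: "'g \<Rightarrow> 'e::banach \<Rightarrow> 'e"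
  assumes "group G" and bm: "banach_module G \<rho>" and "H \<subseteq> carrier G" and "x \<in> carrier G" and "x \<otimes> x \<noteq> \<one>"
  shows "alternating G H \<rho> (bump G \<rho> x v)"
  unfolding alternating_def
proof
  interpret group G by fact
  fix g assume "g \<in> H"
  then have g: "g \<in> carrier G"
    using assms(3) by blast
  have "inv x \<noteq> x"
    using assms(4,5) by (metis r_inv)
  have inv_inv_rho: "\<rho> y (\<rho> (inv y) v) = v" if "y \<in> carrier G" for y
    using that banach_moduleD(3)[OF bm] banach_moduleD(4)[OF bm that inv_closed[OF that], of v, symmetric]
    by simp
  show "bump G \<rho> x v g + \<rho> g (bump G \<rho> x v (inv g)) = 0"
  proof (cases "g = x \<or> g = inv x")
    case True
    with \<open>inv x \<noteq> x\<close> assms(4) show ?thesis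
      using banach_moduleD(1)[OF bm g] inv_inv_rho[OF assms(4)] inv_inv_rho[OF inv_closed[OF assms(4)]]
      by (auto simp: bump_def linear_neg)
  next
    case False
    then have "inv g \<noteq> x" and "inv g \<noteq> inv x"
      using g assms(4) by (auto simp: inv_inv[symmetric])
    with False show ?thesis
      using banach_moduleD(1)[OF bm g] by (simp add: bump_def linear_0)
  qed
qed

lemma bump_alt_quasicocycle:
  fixes G :: "('g, 'b) monoid_scheme" (structure) and \<rho> :: "'g \<Rightarrow> 'e::banach \<Rightarrow> 'e"
  assumes "group G" and "banach_module G \<rho>" and "subgroup H G" and "x \<in> H" and "x \<otimes> x \<noteq> \<one>"
  shows "alt_quasicocycle G H \<rho> (bump G \<rho> x v)"
proof -
  have "H \<subseteq> carrier G" and "x \<in> carrier G"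
    using assms(3,4) subgroup.subset by blast+
  then show ?thesis
    unfolding alt_quasicocycle_def
    using quasicocycle_if_bounded[where f = "bump G \<rho> x v" and C = "norm v", OF assms(2) \<open>H \<subseteq> carrier G\<close>]
      norm_bump_le[OF assms(2) \<open>x \<in> carrier G\<close> assms(1)]
      bump_alternating[OF assms(1,2) \<open>H \<subseteq> carrier G\<close> \<open>x \<in> carrier G\<close> assms(5)] by blast
qed

lemma zero_alt_quasicocycle:
  assumes "banach_module G \<rho>" and "H \<subseteq> carrier G"
  shows "alt_quasicocycle G H \<rho> (\<lambda>_. 0)"
  using assms banach_moduleD(1)[OF assms(1)]
  by (auto simp: alt_quasicocycle_def quasicocycle_def alternating_def linear_0 subset_iff)

lemma alternating_linear_combination:
  assumes "banach_module G \<rho>" and "H \<subseteq> carrier G" and "\<And>i. i \<in> I \<Longrightarrow> alternating G H \<rho> (f i)"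
  shows "alternating G H \<rho> (\<lambda>g. \<Sum>i\<in>I. c i *\<^sub>R f i g)"
  unfolding alternating_def
proof
  fix g assume "g \<in> H"
  then have "(\<Sum>i\<in>I. c i *\<^sub>R f i g) + \<rho> g (\<Sum>i\<in>I. c i *\<^sub>R f i (inv\<^bsub>G\<^esub> g))
      = (\<Sum>i\<in>I. c i *\<^sub>R (f i g + \<rho> g (f i (inv\<^bsub>G\<^esub> g))))"
    using assms(2) banach_moduleD(1)[OF assms(1)]
    by (auto simp: linear_sum linear_scale scaleR_add_right sum.distrib)
  also have "\<dots> = 0"
    using assms(3) \<open>g \<in> H\<close> by (simp add: alternating_def)
  finally show "(\<Sum>i\<in>I. c i *\<^sub>R f i g) + \<rho> g (\<Sum>i\<in>I. c i *\<^sub>R f i (inv\<^bsub>G\<^esub> g)) = 0" .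
qed

context group
begin

lemma int_pow_eq_iff_ord_0: "a \<in> carrier G \<Longrightarrow> ord a = 0 \<Longrightarrow> a [^] m = a [^] n \<longleftrightarrow> m = (n :: int)"
  by (auto simp: int_pow_eq)

lemma bump_int_pow:
  fixes k m :: int
  assumes "a \<in> carrier G" and "ord a = 0"
  shows "bump G \<rho> (a [^] k) v (a [^] m)
    = (if m = k then v else if m = - k then - \<rho> (a [^] (- k)) v else 0)"
proof -
  have "inv (a [^] k) = a [^] (- k)"
    using int_pow_neg[OF assms(1)] by simp
  then show ?thesis
    unfolding bump_def using assms by (simp add: int_pow_eq_iff_ord_0)
qed

text \<open>The exponents \<open>6 i + 1\<close> are chosen so that neither \<open>2 k\<close> nor \<open>3 k\<close> is \<open>\<plusminus>\<close> another one.\<close>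
lemma bump_combination_not_cocycle:
  fixes \<rho> :: "'a \<Rightarrow> 'e::banach \<Rightarrow> 'e"
  assumes bm: "banach_module G \<rho>" and "subgroup H G" and "a \<in> H" and "ord a = 0" and "v \<noteq> 0"
    and cocycle: "cocycle G H \<rho> (\<lambda>g. \<Sum>i<n. c i *\<^sub>R bump G \<rho> (a [^] (6 * int i + 1)) v g)"
    and "j < n"
  shows "c j = 0"
proof -
  define f where "f = (\<lambda>g. \<Sum>i<n. c i *\<^sub>R bump G \<rho> (a [^] (6 * int i + 1)) v g)"
  define k where "k = 6 * int j + 1"
  have a: "a \<in> carrier G"
    using \<open>a \<in> H\<close> subgroup.subset[OF \<open>subgroup H G\<close>] by blast
  have f_pow: "f (a [^] m) = (\<Sum>i<n. c i *\<^sub>R (if m = 6 * int i + 1 then v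
      else if m = - (6 * int i + 1) then - \<rho> (a [^] (- (6 * int i + 1))) v else 0))" for m :: int
    unfolding f_def bump_int_pow[OF a \<open>ord a = 0\<close>] ..
  have "f (a [^] k) = (\<Sum>i<n. if i = j then c j *\<^sub>R v else 0)"
    unfolding f_pow k_def by (intro sum.cong) auto
  also have "\<dots> = c j *\<^sub>R v"
    using \<open>j < n\<close> by simp
  finally have f_k: "f (a [^] k) = c j *\<^sub>R v" .
  have f_2k: "f (a [^] (2 * k)) = 0" and f_3k: "f (a [^] (3 * k)) = 0"
    unfolding f_pow k_def by (auto intro!: sum.neutral) presburger+
  have pow_H: "a [^] m \<in> H" for m :: int
    by (rule subgroup_int_pow_closed[OF \<open>subgroup H G\<close> \<open>a \<in> H\<close>])
  have "a [^] (3 * k) = a [^] (2 * k) \<otimes> a [^] k"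
    using a by (simp add: int_pow_mult[symmetric] algebra_simps)
  then have "f (a [^] (3 * k)) = f (a [^] (2 * k)) + \<rho> (a [^] (2 * k)) (f (a [^] k))"
    using cocycle[folded f_def] pow_H unfolding cocycle_def by simp
  then have "\<rho> (a [^] (2 * k)) (c j *\<^sub>R v) = 0"
    by (simp add: f_k f_2k f_3k)
  then have "norm (c j *\<^sub>R v) = 0"
    using banach_moduleD(2)[OF bm, of "a [^] (2 * k)" "c j *\<^sub>R v"] a by simp
  with \<open>v \<noteq> 0\<close> show ?thesis
    by simp
qed

end

lemma cob1_linear_combination:
  assumes "banach_module G \<rho>" and "g \<in> carrier G" and "h \<in> carrier G"
    and "\<And>x. x \<in> carrier G \<Longrightarrow> F x = (\<Sum>i\<in>I. c i *\<^sub>R F' i x)" and "g \<otimes>\<^bsub>G\<^esub> h \<in> carrier G"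
  shows "cob1 G \<rho> F (g, h) = (\<Sum>i\<in>I. c i *\<^sub>R cob1 G \<rho> (F' i) (g, h))"
  using assms banach_moduleD(1)[OF assms(1) assms(2)]
  by (simp add: cob1_def linear_sum linear_scale scaleR_diff_right scaleR_add_right sum.distrib
      sum_subtractf)

lemma bounded_coboundaries2_cong:
  "c \<in> bounded_coboundaries2 G \<rho> \<Longrightarrow> (\<And>g h. g \<in> carrier G \<Longrightarrow> h \<in> carrier G \<Longrightarrow> c' (g, h) = c (g, h))
    \<Longrightarrow> c' \<in> bounded_coboundaries2 G \<rho>"
  unfolding bounded_coboundaries2_def by auto

section \<open>Split quasicocycles of a free product\<close>

lemma split_word_linear_combination:
  assumes "\<And>x. x \<in> set w \<Longrightarrow> linear (\<rho> x)"
  shows "split_word A \<rho> (\<lambda>x. \<Sum>i\<in>I. c i *\<^sub>R fA i x) (\<lambda>x. \<Sum>i\<in>I. c i *\<^sub>R fB i x) w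
    = (\<Sum>i\<in>I. c i *\<^sub>R split_word A \<rho> (fA i) (fB i) w)"
  using assms
  by (induction w) (simp_all add: linear_sum linear_scale scaleR_add_right sum.distrib)

locale free_splitting = group G for G :: "('g, 'b) monoid_scheme" (structure) +
  fixes A B :: "'g set"
  assumes free_product_splitting: "free_product_splitting G A B"
begin

lemma subgroup_A: "subgroup A G" and subgroup_B: "subgroup B G" and A_Int_B: "A \<inter> B = {\<one>}"
  and normal_form_exists_unique: "g \<in> carrier G \<Longrightarrow> \<exists>!w. reduced_word G A B w \<and> word_prod G w = g"
  using free_product_splitting unfolding free_product_splitting_def by auto

lemma A_subset_carrier: "A \<subseteq> carrier G"
  using subgroup_A subgroup.subset by blast

lemma B_subset_carrier: "B \<subseteq> carrier G"
  using subgroup_B subgroup.subset by blast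

lemma word_prod_Nil [simp]: "word_prod G [] = \<one>"
  by (simp add: word_prod_def)

lemma word_prod_Cons [simp]: "word_prod G (x # w) = x \<otimes> word_prod G w"
  by (simp add: word_prod_def)

lemma word_prod_closed: "set w \<subseteq> carrier G \<Longrightarrow> word_prod G w \<in> carrier G"
  by (induction w) auto

lemma reduced_word_letters: "reduced_word G A B w \<Longrightarrow> set w \<subseteq> carrier G"
  unfolding reduced_word_def using A_subset_carrier B_subset_carrier by blast

lemma reduced_word_Cons:
  assumes "reduced_word G A B w" and "x \<in> (A - {\<one>}) \<union> (B - {\<one>})"
    and "w \<noteq> [] \<Longrightarrow> \<not> (x \<in> A \<and> hd w \<in> A) \<and> \<not> (x \<in> B \<and> hd w \<in> B)"
  shows "reduced_word G A B (x # w)"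
proof -
  have "\<not> ((x # w) ! i \<in> A \<and> (x # w) ! Suc i \<in> A) \<and> \<not> ((x # w) ! i \<in> B \<and> (x # w) ! Suc i \<in> B)"
    if i: "Suc i < length (x # w)" for i
  proof (cases i)
    case 0
    with i assms(3) show ?thesis
      by (simp add: hd_conv_nth)
  next
    case (Suc j)
    with i assms(1) show ?thesis
      unfolding reduced_word_def by auto
  qed
  with assms(1,2) show ?thesis
    unfolding reduced_word_def by auto
qed

lemma normal_form_word_prod: "reduced_word G A B w \<Longrightarrow> normal_form G A B (word_prod G w) = w"
  unfolding normal_form_def
  by (rule the1_equality[OF normal_form_exists_unique]) (simp_all add: word_prod_closed reduced_word_letters)

lemma reduced_normal_form: "g \<in> carrier G \<Longrightarrow> reduced_word G A B (normal_form G A B g)"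
  unfolding normal_form_def using theI'[OF normal_form_exists_unique] by blast

definition alternating_word :: "'g \<Rightarrow> 'g list \<Rightarrow> 'g list" where
  "alternating_word b xs = concat (map (\<lambda>x. [x, b]) xs)"

lemma alternating_word_Nil [simp]: "alternating_word b [] = []"
  and alternating_word_Cons [simp]: "alternating_word b (x # xs) = x # b # alternating_word b xs"
  by (simp_all add: alternating_word_def)

lemma reduced_alternating_word:
  assumes "b \<in> B - {\<one>}" and "set xs \<subseteq> A - {\<one>}"
  shows "reduced_word G A B (alternating_word b xs)"
  using assms(2)
proof (induction xs)
  case Nil
  show ?case
    by (simp add: reduced_word_def)
next
  case (Cons x xs)
  have "b \<notin> A" and "x \<notin> B"
    using assms(1) Cons.prems A_Int_B by auto
  have "reduced_word G A B (b # alternating_word b xs)"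
  proof (rule reduced_word_Cons)
    show "reduced_word G A B (alternating_word b xs)"
      using Cons by simp
    assume "alternating_word b xs \<noteq> []"
    then have "hd (alternating_word b xs) \<in> A - {\<one>}"
      using Cons.prems by (cases xs) auto
    then show "\<not> (b \<in> A \<and> hd (alternating_word b xs) \<in> A) \<and> \<not> (b \<in> B \<and> hd (alternating_word b xs) \<in> B)"
      using \<open>b \<notin> A\<close> A_Int_B by auto
  qed (use assms(1) in auto)
  then show ?case
    using Cons.prems \<open>x \<notin> B\<close> \<open>b \<notin> A\<close> by (auto intro: reduced_word_Cons)
qed

lemma alternating_word_closed:
  "b \<in> B \<Longrightarrow> set xs \<subseteq> A \<Longrightarrow> word_prod G (alternating_word b xs) \<in> carrier G"
  using A_subset_carrier B_subset_carrier by (induction xs) auto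

lemma word_prod_alternating_word_Cons:
  "b \<in> B \<Longrightarrow> x \<in> A \<Longrightarrow> set xs \<subseteq> A \<Longrightarrow>
    word_prod G (alternating_word b (x # xs)) = (x \<otimes> b) \<otimes> word_prod G (alternating_word b xs)"
  using A_subset_carrier B_subset_carrier by (simp add: m_assoc subset_iff alternating_word_closed)

lemma split_quasicocycle_alternating_word_Cons:
  fixes \<rho> :: "'g \<Rightarrow> 'e::banach \<Rightarrow> 'e"
  assumes "banach_module G \<rho>" and "b \<in> B - {\<one>}" and "x \<in> A - {\<one>}" and "set xs \<subseteq> A - {\<one>}"
  shows "split_quasicocycle G A B \<rho> f (\<lambda>_. 0) (word_prod G (alternating_word b (x # xs)))
    = f x + \<rho> (x \<otimes> b) (split_quasicocycle G A B \<rho> f (\<lambda>_. 0) (word_prod G (alternating_word b xs)))"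
proof -
  have nf: "normal_form G A B (word_prod G (alternating_word b ys)) = alternating_word b ys"
    if "set ys \<subseteq> A - {\<one>}" for ys
    using normal_form_word_prod[OF reduced_alternating_word[OF assms(2) that]] .
  have "b \<notin> A"
    using assms(2) A_Int_B by blast
  moreover have "\<rho> (x \<otimes> b) = \<rho> x \<circ> \<rho> b"
    using assms(1-3) A_subset_carrier B_subset_carrier unfolding banach_module_def by blast
  moreover have "set (x # xs) \<subseteq> A - {\<one>}"
    using assms(3,4) by simp
  ultimately show ?thesis
    unfolding split_quasicocycle_def nf[OF assms(4)] nf[OF \<open>set (x # xs) \<subseteq> A - {\<one>}\<close>]
    using assms(3) by simp
qed

lemma split_quasicocycle_linear_combination:
  fixes \<rho> :: "'g \<Rightarrow> 'e::banach \<Rightarrow> 'e"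
  assumes "banach_module G \<rho>" and "g \<in> carrier G"
  shows "split_quasicocycle G A B \<rho> (\<lambda>x. \<Sum>i\<in>I. c i *\<^sub>R fA i x) (\<lambda>x. \<Sum>i\<in>I. c i *\<^sub>R fB i x) g
    = (\<Sum>i\<in>I. c i *\<^sub>R split_quasicocycle G A B \<rho> (fA i) (fB i) g)"
  unfolding split_quasicocycle_def
  using reduced_word_letters[OF reduced_normal_form[OF assms(2)]] banach_moduleD(1)[OF assms(1)]
  by (intro split_word_linear_combination) blast

lemma split_quasicocycle_minus_cocycle_alternating_word_Cons:
  fixes \<rho> :: "'g \<Rightarrow> 'e::banach \<Rightarrow> 'e" and f :: "'g \<Rightarrow> 'e"
  assumes bm: "banach_module G \<rho>" and z: "cocycle G (carrier G) \<rho> z"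
    and b: "b \<in> B - {\<one>}" and x: "x \<in> A - {\<one>}" and xs: "set xs \<subseteq> A - {\<one>}"
  defines "F \<equiv> \<lambda>g. split_quasicocycle G A B \<rho> f (\<lambda>_. 0) g - z g"
    and "W \<equiv> \<lambda>xs. word_prod G (alternating_word b xs)"
  shows "F (W (x # xs)) = (f x - z (x \<otimes> b)) + \<rho> (x \<otimes> b) (F (W xs))"
proof -
  have xb: "x \<otimes> b \<in> carrier G"
    using b x A_subset_carrier B_subset_carrier by auto
  moreover have "W xs \<in> carrier G"
    unfolding W_def using b xs by (intro alternating_word_closed) auto
  moreover have "W (x # xs) = (x \<otimes> b) \<otimes> W xs"
    unfolding W_def using word_prod_alternating_word_Cons b x xs by blast
  ultimately have "z (W (x # xs)) = z (x \<otimes> b) + \<rho> (x \<otimes> b) (z (W xs))"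
    using z unfolding cocycle_def by auto
  with split_quasicocycle_alternating_word_Cons[OF bm b x xs, of f]
  show ?thesis
    unfolding F_def W_def using banach_moduleD(1)[OF bm xb] by (simp add: linear_diff)
qed

text \<open>Along the words \<open>x\<^sub>1 b x\<^sub>2 b \<dots> x\<^sub>n b\<close> the bounded cochain witnessing triviality obeys an
  affine recursion with isometric linear parts; a common fixed point corrects the cocycle.\<close>
lemma trivial_split_class_imp_cocycle_through_letters:
  fixes \<rho> :: "'g \<Rightarrow> 'e::banach \<Rightarrow> 'e"
  assumes bm: "banach_module G \<rho>" and "finite_dimensional_space TYPE('e)" and b: "b \<in> B - {\<one>}"
    and trivial: "cob1 G \<rho> (split_quasicocycle G A B \<rho> f (\<lambda>_. 0)) \<in> bounded_coboundaries2 G \<rho>"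
  obtains Z where "cocycle G (carrier G) \<rho> Z" and "\<And>x. x \<in> A - {\<one>} \<Longrightarrow> Z (x \<otimes> b) = f x"
proof -
  define F where "F = split_quasicocycle G A B \<rho> f (\<lambda>_. 0)"
  obtain \<phi> C where \<phi>_bounded: "\<And>g. g \<in> carrier G \<Longrightarrow> norm (\<phi> g) \<le> C"
    and cob: "\<And>g h. g \<in> carrier G \<Longrightarrow> h \<in> carrier G \<Longrightarrow> cob1 G \<rho> F (g, h) = cob1 G \<rho> \<phi> (g, h)"
    using trivial unfolding bounded_coboundaries2_def F_def by blast
  define z where "z g = F g - \<phi> g" for g
  have z: "cocycle G (carrier G) \<rho> z"
    unfolding z_def using cocycle_diff_of_equal_coboundaries[OF bm cob] .
  define W where "W xs = word_prod G (alternating_word b xs)" for xs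
  define \<Omega> where "\<Omega> = \<phi> ` W ` {xs. set xs \<subseteq> A - {\<one>}}"
  have "\<exists>p. \<forall>x\<in>A - {\<one>}. (f x - z (x \<otimes> b)) + \<rho> (x \<otimes> b) p = p"
  proof (rule affine_isometries_common_fixed_point)
    show "bounded \<Omega>"
      unfolding \<Omega>_def W_def bounded_iff using \<phi>_bounded alternating_word_closed b by blast
    show "\<Omega> \<noteq> {}"
      unfolding \<Omega>_def by (auto intro: exI[of _ "[]"])
    show "\<rho> (x \<otimes> b) \<in> linear_isometries" if "x \<in> A - {\<one>}" for x
      using that b A_subset_carrier B_subset_carrier banach_module_linear_isometry[OF bm] by blast
    show "(f x - z (x \<otimes> b)) + \<rho> (x \<otimes> b) v \<in> \<Omega>" if x: "x \<in> A - {\<one>}" and "v \<in> \<Omega>" for x v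
    proof -
      obtain xs where xs: "set xs \<subseteq> A - {\<one>}" and v: "v = \<phi> (W xs)"
        using \<open>v \<in> \<Omega>\<close> unfolding \<Omega>_def by blast
      have "\<phi> (W (x # xs)) = (f x - z (x \<otimes> b)) + \<rho> (x \<otimes> b) v"
        using split_quasicocycle_minus_cocycle_alternating_word_Cons[OF bm z b x xs, where f = f]
        unfolding v W_def z_def F_def by simp
      then show ?thesis
        unfolding \<Omega>_def using x xs by (auto intro!: image_eqI[of _ _ "W (x # xs)"])
    qed
  qed (rule assms(2))
  then obtain p where p: "\<And>x. x \<in> A - {\<one>} \<Longrightarrow> (f x - z (x \<otimes> b)) + \<rho> (x \<otimes> b) p = p"
    by blast
  show ?thesis
  proof
    show "cocycle G (carrier G) \<rho> (\<lambda>g. z g + p - \<rho> g p)"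
      by (rule cocycle_add_coboundary[OF is_group bm z])
    show "z (x \<otimes> b) + p - \<rho> (x \<otimes> b) p = f x" if "x \<in> A - {\<one>}" for x
      using p[OF that] by (simp add: algebra_simps)
  qed
qed

theorem trivial_split_class_imp_cocycle:
  fixes \<rho> :: "'g \<Rightarrow> 'e::banach \<Rightarrow> 'e"
  assumes "banach_module G \<rho>" and "finite_dimensional_space TYPE('e)" and "B \<noteq> {\<one>}"
    and "x\<^sub>0 \<in> A" and "x\<^sub>0 \<otimes> x\<^sub>0 \<noteq> \<one>" and "alternating G A \<rho> f"
    and "cob1 G \<rho> (split_quasicocycle G A B \<rho> f (\<lambda>_. 0)) \<in> bounded_coboundaries2 G \<rho>"
  shows "cocycle G A \<rho> f"
proof -
  obtain b where b: "b \<in> B - {\<one>}"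
    using \<open>B \<noteq> {\<one>}\<close> subgroup.one_closed[OF subgroup_B] by blast
  then obtain Z where Z: "cocycle G (carrier G) \<rho> Z" and "\<And>x. x \<in> A - {\<one>} \<Longrightarrow> Z (x \<otimes> b) = f x"
    using trivial_split_class_imp_cocycle_through_letters assms(1,2,7) by metis
  then have "f x = Z x" if "x \<in> A" for x
    using alternating_eq_cocycle_through_letters[OF is_group assms(1) subgroup_A Z assms(6)] b
      B_subset_carrier assms(4,5) that by blast
  with Z show ?thesis
    using A_subset_carrier subgroup.m_closed[OF subgroup_A] unfolding cocycle_def by (simp add: subset_iff)
qed

theorem split_classes_infinite_dimensional:
  fixes \<rho> :: "'g \<Rightarrow> 'e::banach \<Rightarrow> 'e" and v :: 'e
  assumes "B \<noteq> {\<one>}" and "a \<in> A" and "infinite_order G a"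
    and "banach_module G \<rho>" and "finite_dimensional_space TYPE('e)" and "v \<noteq> 0"
  shows "infinite_dimensional_in_H2b G \<rho> (split_cocycles G A B \<rho>)"
proof -
  have a: "a \<in> carrier G" "ord a = 0"
    using assms(2,3) A_subset_carrier ord_eq_0 unfolding infinite_order_def by auto
  define f where "f i = bump G \<rho> (a [^] (6 * int i + 1)) v" for i
  have square_ne_one: "a [^] (6 * int i + 1) \<otimes> a [^] (6 * int i + 1) \<noteq> \<one>" for i
    using int_pow_eq_iff_ord_0[OF a, of "2 * (6 * int i + 1)" 0] a by (simp add: int_pow_mult[symmetric])
  then have f: "alt_quasicocycle G A \<rho> (f i)" for i
    unfolding f_def using subgroup_int_pow_closed[OF subgroup_A \<open>a \<in> A\<close>]
    by (intro bump_alt_quasicocycle[OF is_group assms(4) subgroup_A])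
  let ?split_class = "\<lambda>f. cob1 G \<rho> (split_quasicocycle G A B \<rho> f (\<lambda>_. 0))"
  have split_classes: "\<forall>i<n. ?split_class (f i) \<in> split_cocycles G A B \<rho>" for n
    unfolding split_cocycles_def using f zero_alt_quasicocycle[OF assms(4) B_subset_carrier] by blast
  have independent: "\<forall>i<n. c i = 0"
    if "(\<lambda>x. \<Sum>i<n. c i *\<^sub>R ?split_class (f i) x) \<in> bounded_coboundaries2 G \<rho>" for n c
  proof -
    have "?split_class (\<lambda>g. \<Sum>i<n. c i *\<^sub>R f i g) \<in> bounded_coboundaries2 G \<rho>"
      using that split_quasicocycle_linear_combination[OF assms(4), where I = "{..<n}" and c = c and fA = f
          and fB = "\<lambda>_ _. 0"]
      by (elim bounded_coboundaries2_cong, intro cob1_linear_combination[OF assms(4)]) simp_all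
    then have "cocycle G A \<rho> (\<lambda>g. \<Sum>i<n. c i *\<^sub>R f i g)"
      using f A_subset_carrier \<open>a \<in> A\<close> square_ne_one[of 0]
      by (intro trivial_split_class_imp_cocycle[OF assms(4,5,1)]
          alternating_linear_combination[OF assms(4)]) (auto simp: alt_quasicocycle_def)
    then show ?thesis
      unfolding f_def using bump_combination_not_cocycle[OF assms(4) subgroup_A \<open>a \<in> A\<close> a(2) \<open>v \<noteq> 0\<close>]
      by blast
  qed
  show ?thesis
    unfolding infinite_dimensional_in_H2b_def
  proof (rule allI, rule exI[of _ "\<lambda>i. ?split_class (f i)"], rule conjI)
    fix n
    show "\<forall>i<n. ?split_class (f i) \<in> split_cocycles G A B \<rho>"
      by (rule split_classes)
    show "\<forall>c. (\<lambda>x. \<Sum>i<n. c i *\<^sub>R ?split_class (f i) x) \<in> bounded_coboundaries2 G \<rho> \<longrightarrow> (\<forall>i<n. c i = 0)"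
      using independent by blast
  qed
qed

end

theorem theorem2p2:
  fixes G :: "('g, 'b) monoid_scheme" and A B :: "'g set"
    and \<rho> :: "'g \<Rightarrow> 'e::banach \<Rightarrow> 'e"
  assumes "group G"
    and "finitely_generated G"
    and "free_product_splitting G A B"
    and "A \<noteq> {\<one>\<^bsub>G\<^esub>}" and "B \<noteq> {\<one>\<^bsub>G\<^esub>}"
    and "\<exists>a\<in>A. infinite_order G a"
    and "banach_module G \<rho>"
    and "finite_dimensional_space TYPE('e)"
    and "\<exists>v::'e. v \<noteq> 0"
  shows "infinite_dimensional_in_H2b G \<rho> (split_cocycles G A B \<rho>)"
proof -
  interpret free_splitting G A B
    using assms(1,3) by (simp add: free_splitting_def free_splitting_axioms_def)
  obtain a and v :: 'e where "a \<in> A" and "infinite_order G a" and "v \<noteq> 0"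
    using assms(6,9) by blast
  then show ?thesis
    using split_classes_infinite_dimensional assms(5,7,8) by blast
qed

end
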